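(* In the model described in the context, with $\overline{Y}_n=\frac1n\sum_{r=1}^nY^{(n)}_r$, $$\mathbb{E}[\overline{Y}_n\mid\mathcal{Y}_n]=\delta e^{-\alpha U^{(n)}},$$ $$\mathbb{E}[\overline{Y}_n^2\mid\mathcal{Y}_n]=n^{-1}-(1-\delta^2)e^{-2\alpha U^{(n)}}+(1-n^{-1})\mathbb{E}[e^{-2\alpha\tau^{(n)}}\mid\mathcal{Y}_n]+n^{-1}\Big(\tfrac{\sigma_a^2}{2\alpha}\Big)^{-1}\mathbb{E}\Big[\sum_{k=1}^{\Upsilon^{(n)}}\sigma^2_{c,\mathrm{I}^{(n)}_k}J_ke^{-2\alpha(T_{\mathrm{I}^{(n)}_k+1}+\dots+T_n)}\,\Big|\,\mathcal{Y}_n\Big]+(1-n^{-1})\Big(\tfrac{\sigma_a^2}{2\alpha}\Big)^{-1}\mathbb{E}\Big[\sum_{k=1}^{\upsilon^{(n)}}\sigma^2_{c,\tilde{\mathrm{I}}^{(n)}_k}\tilde{J}_ke^{-2\alpha(T_{\tilde{\mathrm{I}}^{(n)}_k+1}+\dots+T_n)}\,\Big|\,\mathcal{Y}_n\Big],$$ and $$\mathrm{Var}(\overline{Y}_n\mid\mathcal{Y}_n)=n^{-1}-e^{-2\alpha U^{(n)}}+(1-n^{-1})\mathbb{E}[e^{-2\alpha\tau^{(n)}}\mid\mathcal{Y}_n]+n^{-1}\Big(\tfrac{\sigma_a^2}{2\alpha}\Big)^{-1}\mathbb{E}\Big[\sum_{k=1}^{\Upsilon^{(n)}}\sigma^2_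{c,\mathrm{I}^{(n)}_k}J_ke^{-2\alpha(T_{\mathrm{I}^{(n)}_k+1}+\dots+T_n)}\,\Big|\,\mathcal{Y}_n\Big]+(1-n^{-1})\Big(\tfrac{\sigma_a^2}{2\alpha}\Big)^{-1}\mathbb{E}\Big[\sum_{k=1}^{\upsilon^{(n)}}\sigma^2_{c,\tilde{\mathrm{I}}^{(n)}_k}\tilde{J}_ke^{-2\alpha(T_{\tilde{\mathrm{I}}^{(n)}_k+1}+\dots+T_n)}\,\Big|\,\mathcal{Y}_n\Big].$$
   Context: Tree: a Yule tree with birth rate $1$ conditioned on $n$ tips. $T_1,\dots,T_n$ are independent with $T_k\sim\mathrm{Exp}(k)$; starting from one lineage at the origin (time $0$), the $k$-th speciation event (internal node $k$, $k=1,\dots,n-1$, node $1$ the root) occurs at time $T_1+\dots+T_k$ and consists of a uniformly chosen one of the $k$ living lineages splitting in two; the tree is observed at time $U^{(n)}=T_1+\dots+T_n$ with $n$ tips. Trait: along every branch $dX(t)=-\alpha(X(t)-\theta)dt+\sigma_adB_t$ with $\alpha>0$, $\sigma_a>0$, $\theta\in\mathbb{R}$, $X(0)=X_0$; at the $k$-th speciation event, independently on each daughter lineage, with probability $p_k$ the value receives an additive jump $\mathcal{N}(0,\sigma_{c,k}^2)$, independent of everything else; daughters then evolve independently. $\mathcal{Y}_n$ is the $\sigma$-algebra generated by the tree (topology and $T_k$) and the jump pattern. $Y^{(n)}_r=(X^{(n)}_r-\theta)/\sqrt{\sigma_a^2/(2\alpha)}$ for tip values $X^{(n)}_r$, and $\delta=(X_0-\theta)/\sqrt{\sigma_a^2/(2\alpha)}$.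 Random lineage (tip chosen uniformly, independently given $\mathcal{Y}_n$): $\Upsilon^{(n)}$ is the number of internal nodes from the root (inclusive) to the tip, with indices $\mathrm{I}^{(n)}_1<\dots<\mathrm{I}^{(n)}_{\Upsilon^{(n)}}$, and $J_k=1$ iff a jump occurred on this lineage just after event $\mathrm{I}^{(n)}_k$. Random pair (unordered pair of distinct tips chosen uniformly): with $m$ the index of their most recent common ancestor, $\tau^{(n)}=T_{m+1}+\dots+T_n$; $\upsilon^{(n)}$ is the number of internal nodes from the root (inclusive) to node $m$, excluding $m$, with indices $\tilde{\mathrm{I}}^{(n)}_1<\dots<\tilde{\mathrm{I}}^{(n)}_{\upsilon^{(n)}}$; $\tilde{J}_k=1$ iff a jump occurred just after event $\tilde{\mathrm{I}}^{(n)}_k$ on the daughter lineage on the common path of the pair. *)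

theory Defs
  imports "HOL-Probability.Probability"
begin

(* Encoding of a Yule tree with n tips (fixed realization, i.e. we work conditionally on Y_n).
   Lineages are labelled by naturals.  Just after event k (k = 0..n-1; "event 0" = origin)
   the living lineages are 0..k.  At event k (1 <= k <= n-1) lineage c k (< k) splits into
   the two daughter lineages labelled c k and k.  T k (k = 1..n) is the waiting time before
   event k (event n = observation time).  jmp k l says whether a jump occurred on daughter
   lineage l (l in {c k, k}) just after event k. *)

datatype innov = OUi nat nat | JUi nat nat
  (* OUi k l: standard normal innovation of the OU transition of lineage l over the
     interval of length T k ending at event k;  JUi k l: standard normal generating
     the jump size on daughter lineage l just after event k *)

definition innov_set :: "nat \<Rightarrow> (nat \<Rightarrow> nat) \<Rightarrow> innov set" where
  "innov_set n c =
     {OUi k l | k l. 1 \<le> k \<and> k \<le> n \<and> l < k} \<union>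
     {JUi k l | k l. 1 \<le> k \<and> k < n \<and> (l = c k \<or> l = k)}"

(* exact OU transition over a time interval of length t, driven by a standard normal w *)
definition ou_step :: "real \<Rightarrow> real \<Rightarrow> real \<Rightarrow> real \<Rightarrow> real \<Rightarrow> real \<Rightarrow> real" where
  "ou_step \<alpha> \<theta> \<sigma>a t x w =
     \<theta> + (x - \<theta>) * exp (- \<alpha> * t) + sqrt (\<sigma>a\<^sup>2 / (2 * \<alpha>) * (1 - exp (- 2 * \<alpha> * t))) * w"

(* trait value of lineage l just after event k *)
fun lval :: "real \<Rightarrow> real \<Rightarrow> real \<Rightarrow> real \<Rightarrow> (nat \<Rightarrow> real) \<Rightarrow> (nat \<Rightarrow> nat) \<Rightarrow> (nat \<Rightarrow> real)
             \<Rightarrow> (nat \<Rightarrow> nat \<Rightarrow> bool) \<Rightarrow> (innov \<Rightarrow> real) \<Rightarrow> nat \<Rightarrow> nat \<Rightarrow> real" where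
  "lval \<alpha> \<theta> \<sigma>a X0 T c sc jmp z 0 l = X0"
| "lval \<alpha> \<theta> \<sigma>a X0 T c sc jmp z (Suc k) l =
     (let pl = (if l = Suc k then c (Suc k) else l)
      in ou_step \<alpha> \<theta> \<sigma>a (T (Suc k)) (lval \<alpha> \<theta> \<sigma>a X0 T c sc jmp z k pl) (z (OUi (Suc k) pl))
         + (if (l = c (Suc k) \<or> l = Suc k) \<and> jmp (Suc k) l
            then sc (Suc k) * z (JUi (Suc k) l) else 0))"

(* trait value at tip r (r < n), observed at time U = T 1 + ... + T n *)
definition tipval :: "real \<Rightarrow> real \<Rightarrow> real \<Rightarrow> real \<Rightarrow> (nat \<Rightarrow> real) \<Rightarrow> (nat \<Rightarrow> nat) \<Rightarrow> (nat \<Rightarrow> real)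
             \<Rightarrow> (nat \<Rightarrow> nat \<Rightarrow> bool) \<Rightarrow> nat \<Rightarrow> (innov \<Rightarrow> real) \<Rightarrow> nat \<Rightarrow> real" where
  "tipval \<alpha> \<theta> \<sigma>a X0 T c sc jmp n z r =
     ou_step \<alpha> \<theta> \<sigma>a (T n) (lval \<alpha> \<theta> \<sigma>a X0 T c sc jmp z (n - 1) r) (z (OUi n r))"

definition Ybar :: "real \<Rightarrow> real \<Rightarrow> real \<Rightarrow> real \<Rightarrow> (nat \<Rightarrow> real) \<Rightarrow> (nat \<Rightarrow> nat) \<Rightarrow> (nat \<Rightarrow> real)
             \<Rightarrow> (nat \<Rightarrow> nat \<Rightarrow> bool) \<Rightarrow> nat \<Rightarrow> (innov \<Rightarrow> real) \<Rightarrow> real" where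
  "Ybar \<alpha> \<theta> \<sigma>a X0 T c sc jmp n z =
     (1 / real n) * (\<Sum>r<n. (tipval \<alpha> \<theta> \<sigma>a X0 T c sc jmp n z r - \<theta>) / sqrt (\<sigma>a\<^sup>2 / (2 * \<alpha>)))"

(* label, just after event k, of the ancestor of the lineage labelled r at the end *)
definition anc :: "nat \<Rightarrow> (nat \<Rightarrow> nat) \<Rightarrow> nat \<Rightarrow> nat \<Rightarrow> nat" where
  "anc n c k r = foldr (\<lambda>j l. if l = j then c j else l) [Suc k..<n] r"

definition Utime :: "nat \<Rightarrow> (nat \<Rightarrow> real) \<Rightarrow> real" where
  "Utime n T = (\<Sum>k=1..n. T k)"

definition tail :: "nat \<Rightarrow> (nat \<Rightarrow> real) \<Rightarrow> nat \<Rightarrow> real" where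
  "tail n T k = (\<Sum>j\<in>{Suc k..n}. T j)"

(* random lineage to tip r: indices I_1 < ... < I_Upsilon of internal nodes on the path *)
definition lin_nodes :: "nat \<Rightarrow> (nat \<Rightarrow> nat) \<Rightarrow> nat \<Rightarrow> nat list" where
  "lin_nodes n c r = sorted_list_of_set {k \<in> {1..<n}. anc n c (k - 1) r = c k}"

definition lin_sum :: "real \<Rightarrow> (nat \<Rightarrow> real) \<Rightarrow> (nat \<Rightarrow> nat) \<Rightarrow> (nat \<Rightarrow> real) \<Rightarrow> (nat \<Rightarrow> nat \<Rightarrow> bool)
                        \<Rightarrow> nat \<Rightarrow> nat \<Rightarrow> real" where
  "lin_sum \<alpha> T c sc jmp n r =
     (let I = lin_nodes n c r
      in \<Sum>i=1..length I.
           (sc (I ! (i - 1)))\<^sup>2 * (if jmp (I ! (i - 1)) (anc n c (I ! (i - 1)) r) then 1 else 0)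
           * exp (- 2 * \<alpha> * tail n T (I ! (i - 1))))"

definition mrca :: "nat \<Rightarrow> (nat \<Rightarrow> nat) \<Rightarrow> nat \<Rightarrow> nat \<Rightarrow> nat" where
  "mrca n c r s = Max {k \<in> {1..<n}. anc n c (k - 1) r = anc n c (k - 1) s}"

definition pair_nodes :: "nat \<Rightarrow> (nat \<Rightarrow> nat) \<Rightarrow> nat \<Rightarrow> nat \<Rightarrow> nat list" where
  "pair_nodes n c r s =
     sorted_list_of_set {k \<in> {1..<n}. k < mrca n c r s \<and> anc n c (k - 1) r = c k}"

definition pair_sum :: "real \<Rightarrow> (nat \<Rightarrow> real) \<Rightarrow> (nat \<Rightarrow> nat) \<Rightarrow> (nat \<Rightarrow> real) \<Rightarrow> (nat \<Rightarrow> nat \<Rightarrow> bool)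
                        \<Rightarrow> nat \<Rightarrow> nat \<Rightarrow> nat \<Rightarrow> real" where
  "pair_sum \<alpha> T c sc jmp n r s =
     (let I = pair_nodes n c r s
      in \<Sum>i=1..length I.
           (sc (I ! (i - 1)))\<^sup>2 * (if jmp (I ! (i - 1)) (anc n c (I ! (i - 1)) r) then 1 else 0)
           * exp (- 2 * \<alpha> * tail n T (I ! (i - 1))))"

(* conditional expectations given Y_n over the uniformly random tip / unordered pair {r,s}, r<s *)
definition avg_tip :: "nat \<Rightarrow> (nat \<Rightarrow> real) \<Rightarrow> real" where
  "avg_tip n f = (\<Sum>r<n. f r) / real n"

definition avg_pair :: "nat \<Rightarrow> (nat \<Rightarrow> nat \<Rightarrow> real) \<Rightarrow> real" where
  "avg_pair n f = (\<Sum>r<n. \<Sum>s\<in>{r<..<n}. f r s) / real (n choose 2)"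

end

theory Submission
  imports Defs
begin

text \<open>Conditionally on the tree and the jump pattern, every tip value is \<open>\<theta>\<close>, plus the initial
  displacement damped over the whole height \<open>U\<close>, plus a linear combination of independent standard
  normal innovations: the OU increments and the jumps along its ancestral lineage, each damped by the
  time remaining after it. Hence \<open>Ybar\<close> is Gaussian with mean \<open>\<delta> e^{-\<alpha>U}\<close>, and its variance is the
  squared norm of the averaged coefficient vector, i.e. \<open>1/n\<^sup>2\<close> times the sum of the inner products
  of the coefficient vectors of all pairs of tips. Two tips share exactly the innovations on their common
  path: the shared OU weights telescope to \<open>(\<sigma>a\<^sup>2/2\<alpha>)(e^{-2\<alpha>\<tau>} - e^{-2\<alpha>U})\<close>, and the shared jumps
  give the jump sum along the common path.\<close>

section \<open>Ancestry\<close>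

lemma anc_Suc_self: "anc (Suc k) c k l = l"
  by (simp add: anc_def)

lemma anc_Suc: "k < m \<Longrightarrow> anc (Suc m) c k l = anc m c k (if l = m then c m else l)"
  by (simp add: anc_def)

lemma anc_from_next:
  "Suc j < n \<Longrightarrow> anc n c j r = (if anc n c (Suc j) r = Suc j then c (Suc j) else anc n c (Suc j) r)"
  by (simp add: anc_def upt_conv_Cons)

lemma anc_le:
  assumes "\<forall>k\<in>{1..<n}. c k < k" and "k < n" and "r < n"
  shows "anc n c k r \<le> k"
  using assms
proof (induction n arbitrary: r)
  case 0
  then show ?case by simp
next
  case (Suc m)
  show ?case
  proof (cases "k = m")
    case True
    then show ?thesis using Suc.prems by (simp add: anc_Suc_self)
  next
    case False
    with Suc.prems have "k < m" by simp
    moreover have "(if r = m then c m else r) < m" using Suc.prems \<open>k < m\<close> by auto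
    ultimately show ?thesis using Suc.IH Suc.prems by (simp add: anc_Suc)
  qed
qed

lemma anc_split_iff:
  assumes "k \<in> {1..<n}"
  shows "anc n c (k - 1) r = c k \<longleftrightarrow> anc n c k r = c k \<or> anc n c k r = k"
  using assms anc_from_next[of "k - 1" n c r] by auto

lemma anc_eq_before:
  assumes "i \<le> k" and "k < n" and "anc n c k r = anc n c k s"
  shows "anc n c i r = anc n c i s"
  using assms
proof (induction "k - i" arbitrary: i)
  case 0
  then show ?case by simp
next
  case (Suc d)
  then have "Suc i < n" and "anc n c (Suc i) r = anc n c (Suc i) s" by auto
  then show ?case using anc_from_next[of i n c] by simp
qed

section \<open>Trait values as affine functions of the innovations\<close>

lemma tail_Suc: "j \<le> k \<Longrightarrow> tail (Suc k) T j = tail k T j + T (Suc k)"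
  by (simp add: tail_def)

lemma tail_self [simp]: "tail k T k = 0"
  by (simp add: tail_def)

lemma tail_pred: "1 \<le> j \<Longrightarrow> j \<le> n \<Longrightarrow> tail n T (j - 1) = T j + tail n T j"
  unfolding tail_def by (subst sum.atLeast_Suc_atMost) auto

lemma Utime_eq_tail: "Utime n T = tail n T 0"
  by (simp add: Utime_def tail_def)

lemma exp_tail_Suc:
  "j \<le> k \<Longrightarrow> exp (- \<alpha> * tail (Suc k) T j) = exp (- \<alpha> * T (Suc k)) * exp (- \<alpha> * tail k T j)"
  by (simp add: tail_Suc exp_add[symmetric] algebra_simps)

definition ou_sd :: "real \<Rightarrow> real \<Rightarrow> real \<Rightarrow> real" where
  "ou_sd \<alpha> \<sigma>a t = sqrt (\<sigma>a\<^sup>2 / (2 * \<alpha>) * (1 - exp (- 2 * \<alpha> * t)))"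

lemma ou_step_eq: "ou_step \<alpha> \<theta> \<sigma>a t x w = \<theta> + (x - \<theta>) * exp (- \<alpha> * t) + ou_sd \<alpha> \<sigma>a t * w"
  by (simp add: ou_step_def ou_sd_def)

lemma ou_sd_sq:
  assumes "\<alpha> > 0" and "t \<ge> 0"
  shows "(ou_sd \<alpha> \<sigma>a t)\<^sup>2 = \<sigma>a\<^sup>2 / (2 * \<alpha>) * (1 - exp (- 2 * \<alpha> * t))"
  using assms unfolding ou_sd_def by (subst real_sqrt_pow2) auto

text \<open>After event \<open>k\<close> the living lineages are \<open>0..k\<close>, so their ancestry is given by \<open>anc (Suc k)\<close>.
  Each OU innovation and each jump on the ancestral lineage enters damped by the time elapsed since.\<close>

lemma lval_expansion:
  "lval \<alpha> \<theta> \<sigma>a X0 T c sc jmp z k l = \<theta> + (X0 - \<theta>) * exp (- \<alpha> * tail k T 0)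
     + (\<Sum>j\<in>{1..k}. exp (- \<alpha> * tail k T j) * (ou_sd \<alpha> \<sigma>a (T j) * z (OUi j (anc (Suc k) c (j - 1) l))
        + (if (anc (Suc k) c j l = c j \<or> anc (Suc k) c j l = j) \<and> jmp j (anc (Suc k) c j l)
           then sc j * z (JUi j (anc (Suc k) c j l)) else 0)))"
proof (induction k arbitrary: l)
  case 0
  then show ?case by (simp add: tail_def)
next
  case (Suc k)
  define p where "p = (if l = Suc k then c (Suc k) else l)"
  define F where "F K L j = exp (- \<alpha> * tail K T j) * (ou_sd \<alpha> \<sigma>a (T j) * z (OUi j (anc (Suc K) c (j - 1) L))
        + (if (anc (Suc K) c j L = c j \<or> anc (Suc K) c j L = j) \<and> jmp j (anc (Suc K) c j L)
           then sc j * z (JUi j (anc (Suc K) c j L)) else 0))" for K L j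
  have older: "F (Suc k) l j = exp (- \<alpha> * T (Suc k)) * F k p j" if "j \<in> {1..k}" for j
  proof -
    have "anc (Suc (Suc k)) c (j - 1) l = anc (Suc k) c (j - 1) p" "anc (Suc (Suc k)) c j l = anc (Suc k) c j p"
      using that by (auto simp: anc_Suc p_def)
    moreover have "j \<le> k" using that by simp
    ultimately show ?thesis unfolding F_def exp_tail_Suc[OF \<open>j \<le> k\<close>] by (simp add: algebra_simps)
  qed
  have newest: "F (Suc k) l (Suc k) = ou_sd \<alpha> \<sigma>a (T (Suc k)) * z (OUi (Suc k) p)
       + (if (l = c (Suc k) \<or> l = Suc k) \<and> jmp (Suc k) l then sc (Suc k) * z (JUi (Suc k) l) else 0)"
    by (simp add: F_def anc_Suc_self anc_Suc p_def)
  have sum_F: "sum (F (Suc k) l) {1..Suc k} = exp (- \<alpha> * T (Suc k)) * sum (F k p) {1..k} + F (Suc k) l (Suc k)"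
    by (simp add: sum.cl_ivl_Suc older sum_distrib_left)
  have IH: "lval \<alpha> \<theta> \<sigma>a X0 T c sc jmp z k p = \<theta> + (X0 - \<theta>) * exp (- \<alpha> * tail k T 0) + sum (F k p) {1..k}"
    using Suc.IH[of p] by (simp add: F_def)
  have "lval \<alpha> \<theta> \<sigma>a X0 T c sc jmp z (Suc k) l = \<theta> + (lval \<alpha> \<theta> \<sigma>a X0 T c sc jmp z k p - \<theta>) * exp (- \<alpha> * T (Suc k))
     + ou_sd \<alpha> \<sigma>a (T (Suc k)) * z (OUi (Suc k) p)
     + (if (l = c (Suc k) \<or> l = Suc k) \<and> jmp (Suc k) l then sc (Suc k) * z (JUi (Suc k) l) else 0)"
    by (simp add: p_def[symmetric] Let_def ou_step_eq)
  also have "\<dots> = \<theta> + (X0 - \<theta>) * exp (- \<alpha> * tail (Suc k) T 0) + sum (F (Suc k) l) {1..Suc k}"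
    unfolding IH sum_F newest exp_tail_Suc[OF le0] by (simp add: algebra_simps)
  finally show ?case unfolding F_def .
qed

lemma lval_cong_jmp:
  "(\<And>j. j \<le> k \<Longrightarrow> jmp' j = jmp j) \<Longrightarrow>
     lval \<alpha> \<theta> \<sigma>a X0 T c sc jmp' z k l = lval \<alpha> \<theta> \<sigma>a X0 T c sc jmp z k l"
  by (induction k arbitrary: l) (simp_all add: Let_def)

text \<open>A tip is a lineage carried through one more OU step with the jumps of that (fictitious)
  last event switched off.\<close>

lemma tipval_eq_lval:
  assumes "n \<ge> 1" and "r < n"
  shows "tipval \<alpha> \<theta> \<sigma>a X0 T c sc jmp n z r = lval \<alpha> \<theta> \<sigma>a X0 T c sc (jmp(n := \<lambda>_. False)) z n r"
proof -
  obtain m where n: "n = Suc m" using assms by (cases n) auto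
  have "lval \<alpha> \<theta> \<sigma>a X0 T c sc (jmp(n := \<lambda>_. False)) z m r = lval \<alpha> \<theta> \<sigma>a X0 T c sc jmp z m r"
    by (rule lval_cong_jmp) (simp add: n)
  then show ?thesis using assms by (simp add: tipval_def n Let_def)
qed

lemma tipval_expansion:
  assumes "n \<ge> 1" and "r < n"
  shows "tipval \<alpha> \<theta> \<sigma>a X0 T c sc jmp n z r = \<theta> + (X0 - \<theta>) * exp (- \<alpha> * Utime n T)
     + (\<Sum>j\<in>{1..n}. exp (- \<alpha> * tail n T j) * ou_sd \<alpha> \<sigma>a (T j) * z (OUi j (anc n c (j - 1) r)))
     + (\<Sum>j\<in>{j\<in>{1..<n}. (anc n c j r = c j \<or> anc n c j r = j) \<and> jmp j (anc n c j r)}.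
          exp (- \<alpha> * tail n T j) * sc j * z (JUi j (anc n c j r)))"
proof -
  have anc: "anc (Suc n) c j r = anc n c j r" if "j < n" for j
    using that assms by (simp add: anc_Suc)
  have jumps: "(\<Sum>j\<in>{1..n}. if (anc n c j r = c j \<or> anc n c j r = j) \<and> (jmp(n := \<lambda>_. False)) j (anc n c j r)
        then exp (- \<alpha> * tail n T j) * sc j * z (JUi j (anc n c j r)) else 0)
      = (\<Sum>j\<in>{j\<in>{1..<n}. (anc n c j r = c j \<or> anc n c j r = j) \<and> jmp j (anc n c j r)}.
          exp (- \<alpha> * tail n T j) * sc j * z (JUi j (anc n c j r)))"
    by (subst sum.inter_filter[symmetric]) (auto intro!: sum.cong)
  have "tipval \<alpha> \<theta> \<sigma>a X0 T c sc jmp n z r = \<theta> + (X0 - \<theta>) * exp (- \<alpha> * Utime n T)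
     + (\<Sum>j\<in>{1..n}. exp (- \<alpha> * tail n T j) * ou_sd \<alpha> \<sigma>a (T j) * z (OUi j (anc n c (j - 1) r))
       + (if (anc n c j r = c j \<or> anc n c j r = j) \<and> (jmp(n := \<lambda>_. False)) j (anc n c j r)
          then exp (- \<alpha> * tail n T j) * sc j * z (JUi j (anc n c j r)) else 0))"
    unfolding tipval_eq_lval[OF assms] lval_expansion Utime_eq_tail
    by (intro arg_cong2[where f = "(+)"] refl sum.cong) (auto simp: anc algebra_simps)
  then show ?thesis
    unfolding sum.distrib jumps by simp
qed

lemma sum_point_masses_mult:
  fixes z :: "'i \<Rightarrow> real"
  assumes "finite S" and "\<forall>j\<in>A. f j \<in> S"
  shows "(\<Sum>i\<in>S. (\<Sum>j\<in>A. if i = f j then a j else 0) * z i) = (\<Sum>j\<in>A. a j * z (f j))"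
proof -
  have "(\<Sum>i\<in>S. (\<Sum>j\<in>A. if i = f j then a j else 0) * z i) = (\<Sum>j\<in>A. \<Sum>i\<in>S. if i = f j then a j * z (f j) else 0)"
    unfolding sum_distrib_right by (subst sum.swap) (auto intro!: sum.cong)
  also have "\<dots> = (\<Sum>j\<in>A. a j * z (f j))"
    using assms by (intro sum.cong) (auto simp: sum.delta)
  finally show ?thesis .
qed

lemma sum_point_masses_product:
  fixes a b :: "'j \<Rightarrow> real"
  assumes "finite S" and "\<forall>j\<in>A. f j \<in> S" and "\<forall>k\<in>B. g k \<in> S"
  shows "(\<Sum>i\<in>S. (\<Sum>j\<in>A. if i = f j then a j else 0) * (\<Sum>k\<in>B. if i = g k then b k else 0))
      = (\<Sum>j\<in>A. \<Sum>k\<in>B. if f j = g k then a j * b k else 0)"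
proof -
  have "(\<Sum>i\<in>S. (\<Sum>j\<in>A. if i = f j then a j else 0) * (\<Sum>k\<in>B. if i = g k then b k else 0))
     = (\<Sum>j\<in>A. \<Sum>k\<in>B. \<Sum>i\<in>S. if i = f j then (if f j = g k then a j * b k else 0) else 0)"
    unfolding sum_product by (subst sum.swap, subst (2) sum.swap) (auto intro!: sum.cong)
  also have "\<dots> = (\<Sum>j\<in>A. \<Sum>k\<in>B. if f j = g k then a j * b k else 0)"
    using assms by (intro sum.cong refl) (auto simp: sum.delta)
  finally show ?thesis .
qed

lemma sum_if_eq_and:
  fixes t :: "'j \<Rightarrow> real"
  assumes "finite A"
  shows "(\<Sum>k\<in>A. if j = k \<and> Q k then t k else 0) = (if j \<in> A \<and> Q j then t j else 0)"
proof -
  have "(\<Sum>k\<in>A. if j = k \<and> Q k then t k else 0) = (\<Sum>k\<in>A. if k = j then (if Q k then t k else 0) else 0)"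
    by (intro sum.cong) auto
  then show ?thesis using assms by (simp add: sum.delta)
qed

lemma sum_sorted_list_of_set_nth:
  fixes g :: "'a::linorder \<Rightarrow> 'b::comm_monoid_add"
  assumes "finite L"
  shows "(\<Sum>i=1..length (sorted_list_of_set L). g (sorted_list_of_set L ! (i - 1))) = sum g L"
proof -
  let ?xs = "sorted_list_of_set L"
  have "(\<Sum>i=1..length ?xs. g (?xs ! (i - 1))) = (\<Sum>i<length ?xs. g (?xs ! i))"
    using sum.atLeast1_atMost_eq[of "\<lambda>i. g (?xs ! (i - 1))" "length ?xs"] by simp
  also have "\<dots> = sum_list (map g ?xs)"
    by (simp add: sum_list_sum_nth atLeast0LessThan)
  also have "\<dots> = sum g (set ?xs)"
    by (simp add: sum.distinct_set_conv_list)
  finally show ?thesis using assms by simp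
qed

lemma finite_innov_set: "finite (innov_set n c)"
proof (rule finite_subset)
  show "innov_set n c \<subseteq> (\<lambda>(k, l). OUi k l) ` ({..n} \<times> {..n}) \<union> (\<lambda>k. JUi k (c k)) ` {..n} \<union> (\<lambda>k. JUi k k) ` {..n}"
    unfolding innov_set_def by (auto simp: image_iff)
qed auto

lemma sum_square_symmetric:
  fixes G :: "nat \<Rightarrow> nat \<Rightarrow> real"
  assumes sym: "\<And>r s. G r s = G s r"
  shows "(\<Sum>r<n. \<Sum>s<n. G r s) = (\<Sum>r<n. G r r) + 2 * (\<Sum>r<n. \<Sum>s\<in>{r<..<n}. G r s)"
proof (induction n)
  case 0
  then show ?case by simp
next
  case (Suc n)
  have "{r<..<Suc n} = insert n {r<..<n}" if "r < n" for r using that by auto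
  moreover have "{n<..<Suc n} = {}" by auto
  ultimately have "(\<Sum>r<Suc n. \<Sum>s\<in>{r<..<Suc n}. G r s) = (\<Sum>r<n. \<Sum>s\<in>{r<..<n}. G r s) + (\<Sum>r<n. G r n)"
    by (simp add: sum.distrib)
  moreover have "(\<Sum>s<n. G n s) = (\<Sum>r<n. G r n)" using sym by simp
  ultimately show ?case using Suc.IH by (simp add: sum.distrib)
qed

lemma sum_pairs_one: "(\<Sum>r<n. \<Sum>s\<in>{r<..<n}. 1) = real (n choose 2)"
proof (induction n)
  case 0
  then show ?case by simp
next
  case (Suc n)
  have insert_n: "{r<..<Suc n} = insert n {r<..<n}" if "r < n" for r using that by auto
  have "(\<Sum>r<Suc n. \<Sum>s\<in>{r<..<Suc n}. 1) = (\<Sum>r<n. \<Sum>s\<in>{r<..<Suc n}. (1::real))"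
    by simp
  also have "\<dots> = (\<Sum>r<n. (\<Sum>s\<in>{r<..<n}. 1) + 1)"
    by (intro sum.cong refl) (simp add: insert_n)
  also have "\<dots> = real (n choose 2) + real n"
    unfolding sum.distrib Suc.IH by simp
  finally show ?case using binomial_Suc_Suc[of n 1] by (simp add: numeral_2_eq_2)
qed

lemma of_nat_choose_two: "2 * real (n choose 2) = real n * (real n - 1)"
proof (induction n)
  case 0
  then show ?case by simp
next
  case (Suc n)
  then show ?case using binomial_Suc_Suc[of n 1] by (simp add: numeral_2_eq_2 algebra_simps)
qed

lemma avg_pair_mult: "real (n choose 2) * avg_pair n f = (\<Sum>r<n. \<Sum>s\<in>{r<..<n}. f r s)"
proof (cases "n < 2")
  case True
  then have "{r<..<n} = {}" if "r < n" for r using that by auto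
  with True show ?thesis by simp
next
  case False
  then show ?thesis by (simp add: avg_pair_def)
qed

section \<open>Moments of linear combinations of independent standard normals\<close>

lemma (in prob_space) std_normal_square_integrable:
  assumes D: "distributed M lborel X std_normal_density"
  shows "integrable M X" and "integrable M (\<lambda>\<omega>. (X \<omega>)\<^sup>2)" and "expectation (\<lambda>\<omega>. (X \<omega>)\<^sup>2) = 1"
proof -
  have nonneg: "\<And>x. 0 \<le> std_normal_density x" by (simp add: normal_density_nonneg)
  show "integrable M X"
    using distributed_integrable[OF D, of "\<lambda>x. x"] integrable_std_normal_moment[of 1] nonneg by simp
  show "integrable M (\<lambda>\<omega>. (X \<omega>)\<^sup>2)"
    using distributed_integrable[OF D, of "\<lambda>x. x\<^sup>2"] integrable_std_normal_moment[of 2] nonneg by simp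
  show "expectation (\<lambda>\<omega>. (X \<omega>)\<^sup>2) = 1"
    using standard_normal_distributed_variance[OF D] standard_normal_distributed_expectation[OF D] by simp
qed

lemma (in prob_space) expectation_indep_std_normal_mult:
  assumes indep: "indep_vars (\<lambda>_. borel) Z S"
    and normal: "\<forall>i\<in>S. distributed M lborel (Z i) std_normal_density"
    and "i \<in> S" and "j \<in> S"
  shows "integrable M (\<lambda>\<omega>. Z i \<omega> * Z j \<omega>)"
    and "expectation (\<lambda>\<omega>. Z i \<omega> * Z j \<omega>) = (if i = j then 1 else 0)"
proof -
  note moments = std_normal_square_integrable[OF normal[rule_format]]
  have "integrable M (\<lambda>\<omega>. Z i \<omega> * Z j \<omega>) \<and> expectation (\<lambda>\<omega>. Z i \<omega> * Z j \<omega>) = (if i = j then 1 else 0)"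
  proof (cases "i = j")
    case True
    then show ?thesis using moments(2,3)[OF \<open>j \<in> S\<close>] by (simp add: power2_eq_square)
  next
    case False
    have "indep_vars (\<lambda>_. borel) Z {i, j}"
      using indep_vars_subset[OF indep] assms(3,4) by auto
    moreover have "\<And>k. k \<in> {i, j} \<Longrightarrow> integrable M (Z k)" using moments(1) assms(3,4) by auto
    ultimately have "integrable M (\<lambda>\<omega>. \<Prod>k\<in>{i, j}. Z k \<omega>)"
      and "expectation (\<lambda>\<omega>. \<Prod>k\<in>{i, j}. Z k \<omega>) = (\<Prod>k\<in>{i, j}. expectation (Z k))"
      by (auto intro: indep_vars_integrable indep_vars_lebesgue_integral)
    then show ?thesis
      using False standard_normal_distributed_expectation normal assms(3,4) by simp
  qed
  then show "integrable M (\<lambda>\<omega>. Z i \<omega> * Z j \<omega>)"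
    and "expectation (\<lambda>\<omega>. Z i \<omega> * Z j \<omega>) = (if i = j then 1 else 0)" by auto
qed

lemma (in prob_space) moments_linear_indep_std_normal:
  assumes "finite S" and indep: "indep_vars (\<lambda>_. borel) Z S"
    and normal: "\<forall>i\<in>S. distributed M lborel (Z i) std_normal_density"
  shows "integrable M (\<lambda>\<omega>. \<Sum>i\<in>S. B i * Z i \<omega>)"
    and "expectation (\<lambda>\<omega>. \<Sum>i\<in>S. B i * Z i \<omega>) = 0"
    and "integrable M (\<lambda>\<omega>. (\<Sum>i\<in>S. B i * Z i \<omega>)\<^sup>2)"
    and "expectation (\<lambda>\<omega>. (\<Sum>i\<in>S. B i * Z i \<omega>)\<^sup>2) = (\<Sum>i\<in>S. (B i)\<^sup>2)"
proof -
  note moments = std_normal_square_integrable[OF normal[rule_format]]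
  note products = expectation_indep_std_normal_mult[OF indep normal]
  have square: "(\<Sum>i\<in>S. B i * Z i \<omega>)\<^sup>2 = (\<Sum>i\<in>S. \<Sum>j\<in>S. (B i * B j) * (Z i \<omega> * Z j \<omega>))" for \<omega>
    by (simp add: power2_eq_square sum_product mult_ac)
  show "integrable M (\<lambda>\<omega>. \<Sum>i\<in>S. B i * Z i \<omega>)"
    using moments(1) by auto
  show "expectation (\<lambda>\<omega>. \<Sum>i\<in>S. B i * Z i \<omega>) = 0"
    using moments(1) standard_normal_distributed_expectation normal by simp
  show "integrable M (\<lambda>\<omega>. (\<Sum>i\<in>S. B i * Z i \<omega>)\<^sup>2)"
    unfolding square using products(1) by auto
  have "expectation (\<lambda>\<omega>. (\<Sum>i\<in>S. B i * Z i \<omega>)\<^sup>2) = (\<Sum>i\<in>S. \<Sum>j\<in>S. (B i * B j) * (if i = j then 1 else 0))"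
    unfolding square using products by (simp add: Bochner_Integration.integrable_sum)
  also have "\<dots> = (\<Sum>i\<in>S. (B i)\<^sup>2)"
    using \<open>finite S\<close> by (simp add: power2_eq_square if_distrib cong: if_cong)
  finally show "expectation (\<lambda>\<omega>. (\<Sum>i\<in>S. B i * Z i \<omega>)\<^sup>2) = (\<Sum>i\<in>S. (B i)\<^sup>2)" .
qed

lemma (in prob_space) moments_affine_indep_std_normal:
  assumes "finite S" and "indep_vars (\<lambda>_. borel) Z S"
    and "\<forall>i\<in>S. distributed M lborel (Z i) std_normal_density"
    and Y: "\<And>\<omega>. Y \<omega> = \<mu> + (\<Sum>i\<in>S. B i * Z i \<omega>)"
  shows "expectation Y = \<mu>"
    and "expectation (\<lambda>\<omega>. (Y \<omega>)\<^sup>2) = \<mu>\<^sup>2 + (\<Sum>i\<in>S. (B i)\<^sup>2)"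
    and "expectation (\<lambda>\<omega>. (Y \<omega> - expectation Y)\<^sup>2) = (\<Sum>i\<in>S. (B i)\<^sup>2)"
proof -
  note linear = moments_linear_indep_std_normal[OF assms(1-3), of B]
  show mean: "expectation Y = \<mu>"
    unfolding Y using linear(1,2) by (simp add: prob_space)
  have "(Y \<omega>)\<^sup>2 = \<mu>\<^sup>2 + 2 * \<mu> * (\<Sum>i\<in>S. B i * Z i \<omega>) + (\<Sum>i\<in>S. B i * Z i \<omega>)\<^sup>2" for \<omega>
    unfolding Y by (simp add: power2_sum)
  then show "expectation (\<lambda>\<omega>. (Y \<omega>)\<^sup>2) = \<mu>\<^sup>2 + (\<Sum>i\<in>S. (B i)\<^sup>2)"
    using linear by (simp add: prob_space)
  show "expectation (\<lambda>\<omega>. (Y \<omega> - expectation Y)\<^sup>2) = (\<Sum>i\<in>S. (B i)\<^sup>2)"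
    unfolding mean Y using linear(4) by simp
qed

section \<open>The coefficient vectors of the tips\<close>

locale yule_ou_tree =
  fixes \<alpha> \<sigma>a :: real and T :: "nat \<Rightarrow> real" and c :: "nat \<Rightarrow> nat"
    and sc :: "nat \<Rightarrow> real" and jmp :: "nat \<Rightarrow> nat \<Rightarrow> bool" and n :: nat
  assumes n_pos: "n \<ge> 1" and \<alpha>_pos: "\<alpha> > 0" and \<sigma>a_pos: "\<sigma>a > 0"
    and T_pos: "\<forall>k\<in>{1..n}. T k > 0" and c_less: "\<forall>k\<in>{1..<n}. c k < k"
begin

abbreviation stat_var :: real where
  "stat_var \<equiv> \<sigma>a\<^sup>2 / (2 * \<alpha>)"

lemma mrca_mem:
  assumes "r < s" and "s < n"
  shows "mrca n c r s \<in> {k \<in> {1..<n}. anc n c (k - 1) r = anc n c (k - 1) s}"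
proof -
  have "anc n c 0 r = 0" and "anc n c 0 s = 0"
    using anc_le[OF c_less, of 0] assms by fastforce+
  then have "1 \<in> {k \<in> {1..<n}. anc n c (k - 1) r = anc n c (k - 1) s}" using assms by simp
  then show ?thesis unfolding mrca_def by (intro Max_in) auto
qed

lemma anc_eq_iff_le_mrca:
  assumes "r < s" and "s < n" and "j \<in> {1..n}"
  shows "anc n c (j - 1) r = anc n c (j - 1) s \<longleftrightarrow> j \<le> mrca n c r s"
proof
  assume eq: "anc n c (j - 1) r = anc n c (j - 1) s"
  show "j \<le> mrca n c r s"
  proof (cases "j = n")
    case True
    moreover obtain m where "n = Suc m" using assms by (cases n) auto
    ultimately have "anc n c (j - 1) r = r" and "anc n c (j - 1) s = s"
      by (simp_all add: anc_Suc_self)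
    with eq assms show ?thesis by simp
  next
    case False
    then show ?thesis unfolding mrca_def using eq assms by (intro Max_ge) auto
  qed
next
  assume "j \<le> mrca n c r s"
  then show "anc n c (j - 1) r = anc n c (j - 1) s"
    using mrca_mem[OF assms(1,2)] anc_eq_before[of "j - 1" "mrca n c r s - 1" n c r s] by auto
qed

lemma anc_eq_iff_less_mrca:
  assumes "r < s" and "s < n" and "k \<in> {1..<n}"
  shows "anc n c k r = anc n c k s \<longleftrightarrow> k < mrca n c r s"
  using anc_eq_iff_le_mrca[OF assms(1,2), of "Suc k"] assms(3) by auto

definition ou_innov :: "nat \<Rightarrow> nat \<Rightarrow> innov" where
  "ou_innov r j = OUi j (anc n c (j - 1) r)"

definition jump_innov :: "nat \<Rightarrow> nat \<Rightarrow> innov" where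
  "jump_innov r j = JUi j (anc n c j r)"

definition jump_events :: "nat \<Rightarrow> nat set" where
  "jump_events r = {j \<in> {1..<n}. (anc n c j r = c j \<or> anc n c j r = j) \<and> jmp j (anc n c j r)}"

definition ou_weight :: "nat \<Rightarrow> real" where
  "ou_weight j = exp (- \<alpha> * tail n T j) * ou_sd \<alpha> \<sigma>a (T j)"

definition jump_weight :: "nat \<Rightarrow> real" where
  "jump_weight j = exp (- \<alpha> * tail n T j) * sc j"

definition ou_coef :: "nat \<Rightarrow> innov \<Rightarrow> real" where
  "ou_coef r i = (\<Sum>j\<in>{1..n}. if i = ou_innov r j then ou_weight j else 0)"

definition jump_coef :: "nat \<Rightarrow> innov \<Rightarrow> real" where
  "jump_coef r i = (\<Sum>j\<in>jump_events r. if i = jump_innov r j then jump_weight j else 0)"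

definition tip_coef :: "nat \<Rightarrow> innov \<Rightarrow> real" where
  "tip_coef r i = ou_coef r i + jump_coef r i"

lemma finite_jump_events: "finite (jump_events r)"
  unfolding jump_events_def by simp

lemma ou_innov_mem:
  assumes "r < n" and "j \<in> {1..n}"
  shows "ou_innov r j \<in> innov_set n c"
proof -
  have "anc n c (j - 1) r < j" using anc_le[OF c_less, of "j - 1" r] assms by fastforce
  then show ?thesis using assms(2) unfolding ou_innov_def innov_set_def by auto
qed

lemma jump_innov_mem: "j \<in> jump_events r \<Longrightarrow> jump_innov r j \<in> innov_set n c"
  unfolding jump_innov_def innov_set_def jump_events_def by auto

lemma tipval_linear:
  assumes "r < n"
  shows "tipval \<alpha> \<theta> \<sigma>a X0 T c sc jmp n z r = \<theta> + (X0 - \<theta>) * exp (- \<alpha> * Utime n T)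
     + (\<Sum>i\<in>innov_set n c. tip_coef r i * z i)"
proof -
  have "(\<Sum>i\<in>innov_set n c. tip_coef r i * z i)
     = (\<Sum>i\<in>innov_set n c. ou_coef r i * z i) + (\<Sum>i\<in>innov_set n c. jump_coef r i * z i)"
    unfolding tip_coef_def distrib_right sum.distrib ..
  also have "\<dots> = (\<Sum>j\<in>{1..n}. ou_weight j * z (ou_innov r j)) + (\<Sum>j\<in>jump_events r. jump_weight j * z (jump_innov r j))"
    unfolding ou_coef_def jump_coef_def using ou_innov_mem[OF assms] jump_innov_mem
    by (simp add: sum_point_masses_mult[OF finite_innov_set])
  finally show ?thesis
    unfolding tipval_expansion[OF n_pos assms]
    by (simp add: ou_weight_def jump_weight_def ou_innov_def jump_innov_def jump_events_def)
qed

text \<open>Two tips share an OU innovation exactly when their lineages have not yet split at that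
  event, and a jump exactly when it occurred on the common part of their lineages.\<close>

lemma ou_coef_inner:
  assumes "r < n" and "s < n"
  shows "(\<Sum>i\<in>innov_set n c. ou_coef r i * ou_coef s i)
    = (\<Sum>j\<in>{j\<in>{1..n}. anc n c (j - 1) r = anc n c (j - 1) s}. (ou_weight j)\<^sup>2)"
proof -
  have "(\<Sum>i\<in>innov_set n c. ou_coef r i * ou_coef s i) = (\<Sum>j\<in>{1..n}. \<Sum>k\<in>{1..n}.
      if ou_innov r j = ou_innov s k then ou_weight j * ou_weight k else 0)"
    unfolding ou_coef_def using ou_innov_mem assms by (intro sum_point_masses_product finite_innov_set) auto
  also have "\<dots> = (\<Sum>j\<in>{1..n}. \<Sum>k\<in>{1..n}.
      if j = k \<and> anc n c (j - 1) r = anc n c (k - 1) s then ou_weight j * ou_weight k else 0)"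
    by (simp add: ou_innov_def)
  also have "\<dots> = (\<Sum>j\<in>{1..n}. if anc n c (j - 1) r = anc n c (j - 1) s then (ou_weight j)\<^sup>2 else 0)"
    by (intro sum.cong refl, subst sum_if_eq_and) (auto simp: power2_eq_square)
  finally show ?thesis by (subst sum.inter_filter) simp_all
qed

lemma jump_coef_inner:
  "(\<Sum>i\<in>innov_set n c. jump_coef r i * jump_coef s i)
    = (\<Sum>j\<in>{j\<in>jump_events r. anc n c j r = anc n c j s}. (jump_weight j)\<^sup>2)"
proof -
  have "(\<Sum>i\<in>innov_set n c. jump_coef r i * jump_coef s i) = (\<Sum>j\<in>jump_events r. \<Sum>k\<in>jump_events s.
      if jump_innov r j = jump_innov s k then jump_weight j * jump_weight k else 0)"
    unfolding jump_coef_def using jump_innov_mem by (intro sum_point_masses_product finite_innov_set) auto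
  also have "\<dots> = (\<Sum>j\<in>jump_events r. \<Sum>k\<in>jump_events s.
      if j = k \<and> anc n c j r = anc n c k s then jump_weight j * jump_weight k else 0)"
    by (simp add: jump_innov_def)
  also have "\<dots> = (\<Sum>j\<in>jump_events r. if anc n c j r = anc n c j s then (jump_weight j)\<^sup>2 else 0)"
    by (intro sum.cong refl, subst sum_if_eq_and)
      (auto simp: power2_eq_square finite_jump_events jump_events_def)
  finally show ?thesis by (subst sum.inter_filter) (simp_all add: finite_jump_events)
qed

lemma ou_jump_coef_inner:
  assumes "r < n"
  shows "(\<Sum>i\<in>innov_set n c. ou_coef r i * jump_coef s i) = 0"
proof -
  have "(\<Sum>i\<in>innov_set n c. ou_coef r i * jump_coef s i) = (\<Sum>j\<in>{1..n}. \<Sum>k\<in>jump_events s.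
      if ou_innov r j = jump_innov s k then ou_weight j * jump_weight k else 0)"
    unfolding ou_coef_def jump_coef_def using ou_innov_mem[OF assms] jump_innov_mem
    by (intro sum_point_masses_product finite_innov_set) auto
  then show ?thesis by (simp add: ou_innov_def jump_innov_def)
qed

lemma tip_coef_inner:
  assumes "r < n" and "s < n"
  shows "(\<Sum>i\<in>innov_set n c. tip_coef r i * tip_coef s i)
    = (\<Sum>j\<in>{j\<in>{1..n}. anc n c (j - 1) r = anc n c (j - 1) s}. (ou_weight j)\<^sup>2)
    + (\<Sum>j\<in>{j\<in>jump_events r. anc n c j r = anc n c j s}. (jump_weight j)\<^sup>2)"
proof -
  have "(\<Sum>i\<in>innov_set n c. tip_coef r i * tip_coef s i)
     = (\<Sum>i\<in>innov_set n c. ou_coef r i * ou_coef s i) + (\<Sum>i\<in>innov_set n c. ou_coef r i * jump_coef s i)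
     + (\<Sum>i\<in>innov_set n c. ou_coef s i * jump_coef r i) + (\<Sum>i\<in>innov_set n c. jump_coef r i * jump_coef s i)"
    unfolding tip_coef_def by (simp add: algebra_simps sum.distrib)
  then show ?thesis
    using assms by (simp add: ou_coef_inner jump_coef_inner ou_jump_coef_inner)
qed

lemma ou_weight_sq:
  assumes "j \<in> {1..n}"
  shows "(ou_weight j)\<^sup>2 = stat_var * (exp (- 2 * \<alpha> * tail n T j) - exp (- 2 * \<alpha> * tail n T (j - 1)))"
proof -
  have "T j > 0" using T_pos assms by auto
  then have sd: "(ou_sd \<alpha> \<sigma>a (T j))\<^sup>2 = stat_var * (1 - exp (- 2 * \<alpha> * T j))"
    using \<alpha>_pos by (simp add: ou_sd_sq)
  have "tail n T (j - 1) = T j + tail n T j" using assms by (intro tail_pred) auto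
  then have "exp (- 2 * \<alpha> * tail n T (j - 1)) = exp (- 2 * \<alpha> * T j) * exp (- 2 * \<alpha> * tail n T j)"
    by (simp add: exp_add[symmetric] algebra_simps)
  moreover have "(exp (- \<alpha> * tail n T j))\<^sup>2 = exp (- 2 * \<alpha> * tail n T j)"
    by (simp add: power2_eq_square exp_add[symmetric])
  ultimately show ?thesis
    unfolding ou_weight_def power_mult_distrib sd by (simp add: algebra_simps)
qed

lemma sum_ou_weight_sq:
  assumes "m \<le> n"
  shows "(\<Sum>j\<in>{1..m}. (ou_weight j)\<^sup>2)
    = stat_var * (exp (- 2 * \<alpha> * tail n T m) - exp (- 2 * \<alpha> * Utime n T))"
proof -
  define g where "g j = exp (- 2 * \<alpha> * tail n T j)" for j
  have "(\<Sum>j\<in>{1..m}. (ou_weight j)\<^sup>2) = (\<Sum>j\<in>{1..m}. stat_var * (g j - g (j - 1)))"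
    using assms by (intro sum.cong) (auto simp: ou_weight_sq g_def)
  also have "\<dots> = stat_var * (\<Sum>j\<in>{1..m}. g j - g (j - 1))"
    by (simp add: sum_distrib_left)
  also have "(\<Sum>j\<in>{1..m}. g j - g (j - 1)) = g m - g 0"
    by (induction m) (simp_all add: sum.cl_ivl_Suc)
  finally show ?thesis by (simp add: g_def Utime_eq_tail)
qed

lemma sum_lineage_jumps:
  "(\<Sum>k\<in>{k \<in> {1..<n}. Q k \<and> anc n c (k - 1) r = c k}.
      (sc k)\<^sup>2 * (if jmp k (anc n c k r) then 1 else 0) * exp (- 2 * \<alpha> * tail n T k))
   = (\<Sum>j\<in>{j \<in> jump_events r. Q j}. (jump_weight j)\<^sup>2)"
proof (rule sum.mono_neutral_cong_right)
  show "{j \<in> jump_events r. Q j} \<subseteq> {k \<in> {1..<n}. Q k \<and> anc n c (k - 1) r = c k}"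
    unfolding jump_events_def using anc_split_iff by auto
  show "\<forall>k \<in> {k \<in> {1..<n}. Q k \<and> anc n c (k - 1) r = c k} - {j \<in> jump_events r. Q j}.
      (sc k)\<^sup>2 * (if jmp k (anc n c k r) then 1 else 0) * exp (- 2 * \<alpha> * tail n T k) = 0"
    using anc_split_iff[of _ n c r] unfolding jump_events_def by auto
  show "(sc k)\<^sup>2 * (if jmp k (anc n c k r) then 1 else 0) * exp (- 2 * \<alpha> * tail n T k) = (jump_weight k)\<^sup>2"
    if "k \<in> {j \<in> jump_events r. Q j}" for k
    using that unfolding jump_events_def jump_weight_def
    by (simp add: power_mult_distrib power2_eq_square exp_add[symmetric])
qed simp

lemma lin_sum_eq: "lin_sum \<alpha> T c sc jmp n r = (\<Sum>j\<in>jump_events r. (jump_weight j)\<^sup>2)"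
proof -
  have "lin_sum \<alpha> T c sc jmp n r = (\<Sum>k\<in>{k \<in> {1..<n}. anc n c (k - 1) r = c k}.
      (sc k)\<^sup>2 * (if jmp k (anc n c k r) then 1 else 0) * exp (- 2 * \<alpha> * tail n T k))"
    unfolding lin_sum_def lin_nodes_def Let_def
    by (rule sum_sorted_list_of_set_nth[where g = "\<lambda>k. (sc k)\<^sup>2 * (if jmp k (anc n c k r) then 1 else 0) * exp (- 2 * \<alpha> * tail n T k)"]) simp
  then show ?thesis using sum_lineage_jumps[where Q = "\<lambda>_. True"] by simp
qed

lemma pair_sum_eq:
  "pair_sum \<alpha> T c sc jmp n r s = (\<Sum>j\<in>{j \<in> jump_events r. j < mrca n c r s}. (jump_weight j)\<^sup>2)"
proof -
  have "pair_sum \<alpha> T c sc jmp n r s = (\<Sum>k\<in>{k \<in> {1..<n}. k < mrca n c r s \<and> anc n c (k - 1) r = c k}.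
      (sc k)\<^sup>2 * (if jmp k (anc n c k r) then 1 else 0) * exp (- 2 * \<alpha> * tail n T k))"
    unfolding pair_sum_def pair_nodes_def Let_def
    by (rule sum_sorted_list_of_set_nth[where g = "\<lambda>k. (sc k)\<^sup>2 * (if jmp k (anc n c k r) then 1 else 0) * exp (- 2 * \<alpha> * tail n T k)"]) simp
  then show ?thesis unfolding sum_lineage_jumps .
qed

lemma tip_coef_inner_self:
  assumes "r < n"
  shows "(\<Sum>i\<in>innov_set n c. tip_coef r i * tip_coef r i)
    = stat_var * (1 - exp (- 2 * \<alpha> * Utime n T)) + lin_sum \<alpha> T c sc jmp n r"
proof -
  have sets: "{j \<in> {1..n}. anc n c (j - 1) r = anc n c (j - 1) r} = {1..n}"
    "{j \<in> jump_events r. anc n c j r = anc n c j r} = jump_events r" by auto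
  have "(\<Sum>j\<in>{1..n}. (ou_weight j)\<^sup>2) = stat_var * (1 - exp (- 2 * \<alpha> * Utime n T))"
    using sum_ou_weight_sq[of n] by simp
  then show ?thesis unfolding tip_coef_inner[OF assms assms] sets lin_sum_eq by simp
qed

lemma tip_coef_inner_pair:
  assumes "r < s" and "s < n"
  shows "(\<Sum>i\<in>innov_set n c. tip_coef r i * tip_coef s i)
    = stat_var * (exp (- 2 * \<alpha> * tail n T (mrca n c r s)) - exp (- 2 * \<alpha> * Utime n T))
      + pair_sum \<alpha> T c sc jmp n r s"
proof -
  have "{j \<in> {1..n}. anc n c (j - 1) r = anc n c (j - 1) s} = {1..mrca n c r s}"
    using anc_eq_iff_le_mrca[OF assms] mrca_mem[OF assms] by auto
  moreover have "{j \<in> jump_events r. anc n c j r = anc n c j s} = {j \<in> jump_events r. j < mrca n c r s}"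
    using anc_eq_iff_less_mrca[OF assms] unfolding jump_events_def by auto
  moreover have "mrca n c r s \<le> n" using mrca_mem[OF assms] by simp
  ultimately show ?thesis
    using tip_coef_inner assms sum_ou_weight_sq by (simp add: pair_sum_eq)
qed

end

section \<open>Averaging over the tips\<close>

context yule_ou_tree
begin

definition mean_coef :: "innov \<Rightarrow> real" where
  "mean_coef i = (\<Sum>r<n. tip_coef r i) / (real n * sqrt stat_var)"

lemma stat_var_pos: "stat_var > 0"
  using \<alpha>_pos \<sigma>a_pos by simp

lemma Ybar_affine:
  "Ybar \<alpha> \<theta> \<sigma>a X0 T c sc jmp n z
     = (X0 - \<theta>) / sqrt stat_var * exp (- \<alpha> * Utime n T) + (\<Sum>i\<in>innov_set n c. mean_coef i * z i)"
proof -
  let ?S = "innov_set n c" and ?sd = "sqrt stat_var"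
  define b where "b = (X0 - \<theta>) * exp (- \<alpha> * Utime n T)"
  define A where "A i = (\<Sum>r<n. tip_coef r i)" for i
  have "(\<Sum>r<n. (tipval \<alpha> \<theta> \<sigma>a X0 T c sc jmp n z r - \<theta>) / ?sd)
      = (\<Sum>r<n. b + (\<Sum>i\<in>?S. tip_coef r i * z i)) / ?sd"
    unfolding sum_divide_distrib by (intro sum.cong) (simp_all add: tipval_linear b_def)
  also have "\<dots> = (real n * b + (\<Sum>i\<in>?S. A i * z i)) / ?sd"
    by (simp add: A_def sum.distrib sum_distrib_right sum.swap[of _ "{..<n}"])
  finally have "Ybar \<alpha> \<theta> \<sigma>a X0 T c sc jmp n z = (1 / real n) * ((real n * b + (\<Sum>i\<in>?S. A i * z i)) / ?sd)"
    by (simp add: Ybar_def)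
  also have "\<dots> = b / ?sd + (\<Sum>i\<in>?S. A i * z i) / (real n * ?sd)"
    using n_pos by (simp add: add_divide_distrib)
  also have "(\<Sum>i\<in>?S. A i * z i) / (real n * ?sd) = (\<Sum>i\<in>?S. mean_coef i * z i)"
    unfolding mean_coef_def A_def by (simp add: sum_divide_distrib[of "\<lambda>i. (\<Sum>r<n. tip_coef r i) * z i"])
  finally show ?thesis by (simp add: b_def)
qed

abbreviation mean_mrca_discount :: real where
  "mean_mrca_discount \<equiv> avg_pair n (\<lambda>r s. exp (- 2 * \<alpha> * tail n T (mrca n c r s)))"

abbreviation mean_lineage_jumps :: real where
  "mean_lineage_jumps \<equiv> avg_tip n (\<lambda>r. lin_sum \<alpha> T c sc jmp n r)"

abbreviation mean_pair_jumps :: real where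
  "mean_pair_jumps \<equiv> avg_pair n (\<lambda>r s. pair_sum \<alpha> T c sc jmp n r s)"

lemma sum_tip_coef_inner_self:
  "(\<Sum>r<n. \<Sum>i\<in>innov_set n c. tip_coef r i * tip_coef r i)
    = real n * stat_var * (1 - exp (- 2 * \<alpha> * Utime n T)) + real n * mean_lineage_jumps"
  using n_pos by (simp add: tip_coef_inner_self sum.distrib avg_tip_def)

lemma sum_tip_coef_inner_pairs:
  "(\<Sum>r<n. \<Sum>s\<in>{r<..<n}. \<Sum>i\<in>innov_set n c. tip_coef r i * tip_coef s i)
    = real (n choose 2) * (stat_var * mean_mrca_discount - stat_var * exp (- 2 * \<alpha> * Utime n T) + mean_pair_jumps)"
proof -
  have "(\<Sum>r<n. \<Sum>s\<in>{r<..<n}. \<Sum>i\<in>innov_set n c. tip_coef r i * tip_coef s i)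
    = (\<Sum>r<n. \<Sum>s\<in>{r<..<n}. stat_var * exp (- 2 * \<alpha> * tail n T (mrca n c r s))
        - stat_var * exp (- 2 * \<alpha> * Utime n T) * 1 + pair_sum \<alpha> T c sc jmp n r s)"
    by (intro sum.cong refl) (simp add: tip_coef_inner_pair algebra_simps)
  also have "\<dots> = stat_var * (\<Sum>r<n. \<Sum>s\<in>{r<..<n}. exp (- 2 * \<alpha> * tail n T (mrca n c r s)))
      - stat_var * exp (- 2 * \<alpha> * Utime n T) * (\<Sum>r<n. \<Sum>s\<in>{r<..<n}. 1)
      + (\<Sum>r<n. \<Sum>s\<in>{r<..<n}. pair_sum \<alpha> T c sc jmp n r s)"
    by (simp only: sum.distrib sum_subtractf sum_distrib_left)
  finally show ?thesis
    unfolding sum_pairs_one avg_pair_mult[symmetric] by (simp add: algebra_simps)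
qed

lemma sum_mean_coef_sq_eq:
  "(\<Sum>i\<in>innov_set n c. (mean_coef i)\<^sup>2)
    = (real n * stat_var * (1 - exp (- 2 * \<alpha> * Utime n T)) + real n * mean_lineage_jumps
       + real n * (real n - 1) * (stat_var * mean_mrca_discount - stat_var * exp (- 2 * \<alpha> * Utime n T)
         + mean_pair_jumps)) / ((real n)\<^sup>2 * stat_var)"
proof -
  let ?S = "innov_set n c"
  define G where "G r s = (\<Sum>i\<in>?S. tip_coef r i * tip_coef s i)" for r s
  define sd where "sd = sqrt stat_var"
  have "(\<Sum>i\<in>?S. (mean_coef i)\<^sup>2) = (\<Sum>i\<in>?S. \<Sum>r<n. \<Sum>s<n. tip_coef r i * tip_coef s i) / ((real n)\<^sup>2 * sd\<^sup>2)"
    unfolding mean_coef_def sd_def[symmetric]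
    by (simp add: power_divide sum_divide_distrib power2_eq_square sum_product mult_ac)
  also have "sd\<^sup>2 = stat_var" unfolding sd_def using stat_var_pos by simp
  also have "(\<Sum>i\<in>?S. \<Sum>r<n. \<Sum>s<n. tip_coef r i * tip_coef s i) = (\<Sum>r<n. \<Sum>s<n. G r s)"
    unfolding G_def by (subst sum.swap) (simp add: sum.swap[of _ ?S])
  also have "\<dots> = (\<Sum>r<n. G r r) + 2 * (\<Sum>r<n. \<Sum>s\<in>{r<..<n}. G r s)"
    by (rule sum_square_symmetric) (simp add: G_def mult.commute)
  finally show ?thesis
    unfolding G_def sum_tip_coef_inner_self sum_tip_coef_inner_pairs of_nat_choose_two[symmetric]
    by (simp add: algebra_simps)
qed

lemma sum_mean_coef_sq:
  "(\<Sum>i\<in>innov_set n c. (mean_coef i)\<^sup>2)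
    = 1 / real n - exp (- 2 * \<alpha> * Utime n T) + (1 - 1 / real n) * mean_mrca_discount
      + (1 / real n) * inverse stat_var * mean_lineage_jumps
      + (1 - 1 / real n) * inverse stat_var * mean_pair_jumps"
proof -
  have field_identity: "(N * K * (1 - E) + N * B + N * (N - 1) * (K * A - K * E + D)) / (N\<^sup>2 * K)
      = 1 / N - E + (1 - 1 / N) * A + (1 / N) * inverse K * B + (1 - 1 / N) * inverse K * D"
    if "N > 0" and "K > 0" for N K E A B D :: real
    using that by (simp add: field_simps power2_eq_square)
  show ?thesis
    unfolding sum_mean_coef_sq_eq by (rule field_identity) (use n_pos stat_var_pos in auto)
qed

end

theorem lemma7:
  fixes M :: "'a measure" and Z :: "innov \<Rightarrow> 'a \<Rightarrow> real"
    and n :: nat and \<alpha> \<sigma>a \<theta> X0 :: real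
    and T :: "nat \<Rightarrow> real" and c :: "nat \<Rightarrow> nat"
    and sc :: "nat \<Rightarrow> real" and jmp :: "nat \<Rightarrow> nat \<Rightarrow> bool"
  assumes M: "prob_space M"
    and n: "n \<ge> 1" and \<alpha>: "\<alpha> > 0" and \<sigma>a: "\<sigma>a > 0"
    and T: "\<forall>k\<in>{1..n}. T k > 0"
    and c: "\<forall>k\<in>{1..<n}. c k < k"
    and indep: "prob_space.indep_vars M (\<lambda>_. borel) Z (innov_set n c)"
    and normal: "\<forall>i\<in>innov_set n c. distributed M lborel (Z i) std_normal_density"
  defines "Yb \<equiv> (\<lambda>\<omega>. Ybar \<alpha> \<theta> \<sigma>a X0 T c sc jmp n (\<lambda>i. Z i \<omega>))"
    and "\<delta> \<equiv> (X0 - \<theta>) / sqrt (\<sigma>a\<^sup>2 / (2 * \<alpha>))"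
    and "U \<equiv> Utime n T"
    and "Etau \<equiv> avg_pair n (\<lambda>r s. exp (- 2 * \<alpha> * tail n T (mrca n c r s)))"
    and "Elin \<equiv> avg_tip n (\<lambda>r. lin_sum \<alpha> T c sc jmp n r)"
    and "Epair \<equiv> avg_pair n (\<lambda>r s. pair_sum \<alpha> T c sc jmp n r s)"
  shows "(\<integral>\<omega>. Yb \<omega> \<partial>M) = \<delta> * exp (- \<alpha> * U)
    \<and> (\<integral>\<omega>. (Yb \<omega>)\<^sup>2 \<partial>M) =
           1 / real n - (1 - \<delta>\<^sup>2) * exp (- 2 * \<alpha> * U) + (1 - 1 / real n) * Etau
           + (1 / real n) * inverse (\<sigma>a\<^sup>2 / (2 * \<alpha>)) * Elin
           + (1 - 1 / real n) * inverse (\<sigma>a\<^sup>2 / (2 * \<alpha>)) * Epair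
    \<and> (\<integral>\<omega>. (Yb \<omega> - (\<integral>\<omega>'. Yb \<omega>' \<partial>M))\<^sup>2 \<partial>M) =
           1 / real n - exp (- 2 * \<alpha> * U) + (1 - 1 / real n) * Etau
           + (1 / real n) * inverse (\<sigma>a\<^sup>2 / (2 * \<alpha>)) * Elin
           + (1 - 1 / real n) * inverse (\<sigma>a\<^sup>2 / (2 * \<alpha>)) * Epair"
proof -
  interpret prob_space M by (rule M)
  interpret yule_ou_tree \<alpha> \<sigma>a T c sc jmp n
    using n \<alpha> \<sigma>a T c by unfold_locales
  have affine: "Yb \<omega> = \<delta> * exp (- \<alpha> * U) + (\<Sum>i\<in>innov_set n c. mean_coef i * Z i \<omega>)" for \<omega>
    unfolding Yb_def \<delta>_def U_def by (rule Ybar_affine)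
  note moments = moments_affine_indep_std_normal[OF finite_innov_set indep normal affine]
  have "(\<delta> * exp (- \<alpha> * U))\<^sup>2 = \<delta>\<^sup>2 * exp (- 2 * \<alpha> * U)"
    by (simp add: power_mult_distrib power2_eq_square exp_add[symmetric])
  then show ?thesis
    using moments sum_mean_coef_sq unfolding Etau_def Elin_def Epair_def U_def
    by (simp add: algebra_simps)
qed

end
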